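(* Let $f:\mathbb{R}^{2}\to\mathbb{R}$ be smooth and normal, and for $k_{1}\neq0$, $k_{2}\neq0$, $x,y\in\mathbb{R}$ let $F(k_{1},y)=\lim_{r\to\infty}\int_{-r}^{r}f(x,y)e^{-ik_{1}x}\,dx$ and $G(x,k_{2})=\lim_{r\to\infty}\int_{-r}^{r}f(x,y)e^{-ik_{2}y}\,dy$. Then for $k_{1}\neq0$, $k_{2}\neq0$ the integrals $F(k_{1},k_{2})=\int_{-\infty}^{\infty}F(k_{1},y)e^{-ik_{2}y}\,dy$ and $G(k_{1},k_{2})=\int_{-\infty}^{\infty}G(x,k_{2})e^{-ik_{1}x}\,dx$ are well defined, and $F(k_{1},k_{2})=G(k_{1},k_{2})=\lim_{m\to\infty,n\to\infty}\int_{-m}^{m}\int_{-n}^{n}f(x,y)e^{-ik_{1}x}e^{-ik_{2}y}\,dx\,dy.$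
   Context: One-variable notions: a smooth $g:\mathbb{R}\setminus V\to\mathbb{R}$, $V\subset\mathbb{R}$ bounded closed, is analytic at infinity if there exist $\epsilon_{1},\epsilon_{2}>0$ such that $g(1/t)=\sum_{n\geq1}a_{n}t^{n}$ for $0<t<\epsilon_{1}$ and $g(1/t)=\sum_{n\geq1}b_{n}t^{n}$ for $-\epsilon_{2}<t<0$, with real coefficients and both power series absolutely convergent on the respective intervals. Two-variable notions: for smooth $f:\mathbb{R}^{2}\to\mathbb{R}$, $f$ is of very moderate decrease if there is $C>0$ with $|f(x,y)|\leq\frac{C}{|(x,y)|}$ for $|(x,y)|>1$, and of moderate decrease if $|f(x,y)|\leq\frac{C}{|(x,y)|^{2}}$ for $|(x,y)|>1$. For fixed $x$ write $f_{x}(y)=f(x,y)$ and for fixed $y$ write $f_{y}(x)=f(x,y)$. $f$ is normal if: (i) for every $x$, $f_{x}$ is analytic at infinity; (ii) for every $y$, $f_{y}$ is analytic at infinity; (iii) $f$ is of very moderate decrease; (iv) $\frac{\partial f}{\partial x}$ and $\frac{\partial f}{\partial y}$ are of moderate decrease; (v) there is a uniform bound on the number of zeros of $f_{x},(f_{x})',(f_{x})''$ and of $f_{y},(f_{y})',(f_{y})''$. *)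

theory Defs
  imports "HOL-Analysis.Analysis"
begin

definition pdx :: "(real \<times> real \<Rightarrow> real) \<Rightarrow> real \<times> real \<Rightarrow> real" where
  "pdx g = (\<lambda>(x, y). deriv (\<lambda>s. g (s, y)) x)"

definition pdy :: "(real \<times> real \<Rightarrow> real) \<Rightarrow> real \<times> real \<Rightarrow> real" where
  "pdy g = (\<lambda>(x, y). deriv (\<lambda>t. g (x, t)) y)"

inductive_set iter_partials :: "(real \<times> real \<Rightarrow> real) \<Rightarrow> (real \<times> real \<Rightarrow> real) set"
  for f where
  base: "f \<in> iter_partials f"
| dx: "g \<in> iter_partials f \<Longrightarrow> pdx g \<in> iter_partials f"
| dy: "g \<in> iter_partials f \<Longrightarrow> pdy g \<in> iter_partials f"

definition smooth2 :: "(real \<times> real \<Rightarrow> real) \<Rightarrow> bool" where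
  "smooth2 f \<longleftrightarrow> (\<forall>g \<in> iter_partials f. continuous_on UNIV g \<and>
      (\<forall>x y. (\<lambda>s. g (s, y)) differentiable (at x) \<and> (\<lambda>t. g (x, t)) differentiable (at y)))"

text \<open>One-variable analyticity at infinity (for functions defined on all of R, i.e. V empty).\<close>
definition analytic_at_infinity :: "(real \<Rightarrow> real) \<Rightarrow> bool" where
  "analytic_at_infinity g \<longleftrightarrow>
     (\<exists>e1>0. \<exists>e2>0. \<exists>a b :: nat \<Rightarrow> real.
        (\<forall>t. 0 < t \<and> t < e1 \<longrightarrow>
            summable (\<lambda>n. \<bar>a n * t ^ Suc n\<bar>) \<and> g (1 / t) = (\<Sum>n. a n * t ^ Suc n)) \<and>
        (\<forall>t. - e2 < t \<and> t < 0 \<longrightarrow>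
            summable (\<lambda>n. \<bar>b n * t ^ Suc n\<bar>) \<and> g (1 / t) = (\<Sum>n. b n * t ^ Suc n)))"

definition very_moderate_decrease :: "(real \<times> real \<Rightarrow> real) \<Rightarrow> bool" where
  "very_moderate_decrease f \<longleftrightarrow>
     (\<exists>C>0. \<forall>p. norm p > 1 \<longrightarrow> \<bar>f p\<bar> \<le> C / norm p)"

definition moderate_decrease :: "(real \<times> real \<Rightarrow> real) \<Rightarrow> bool" where
  "moderate_decrease f \<longleftrightarrow>
     (\<exists>C>0. \<forall>p. norm p > 1 \<longrightarrow> \<bar>f p\<bar> \<le> C / (norm p)\<^sup>2)"

definition zeros_bounded :: "nat \<Rightarrow> (real \<Rightarrow> real) \<Rightarrow> bool" where
  "zeros_bounded N g \<longleftrightarrow> finite {t. g t = 0} \<and> card {t. g t = 0} \<le> N"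

definition normal :: "(real \<times> real \<Rightarrow> real) \<Rightarrow> bool" where
  "normal f \<longleftrightarrow>
     (\<forall>x. analytic_at_infinity (\<lambda>y. f (x, y))) \<and>
     (\<forall>y. analytic_at_infinity (\<lambda>x. f (x, y))) \<and>
     very_moderate_decrease f \<and>
     moderate_decrease (pdx f) \<and> moderate_decrease (pdy f) \<and>
     (\<exists>N. (\<forall>x. zeros_bounded N (\<lambda>y. f (x, y)) \<and>
               zeros_bounded N (deriv (\<lambda>y. f (x, y))) \<and>
               zeros_bounded N (deriv (deriv (\<lambda>y. f (x, y))))) \<and>
          (\<forall>y. zeros_bounded N (\<lambda>x. f (x, y)) \<and>
               zeros_bounded N (deriv (\<lambda>x. f (x, y))) \<and>
               zeros_bounded N (deriv (deriv (\<lambda>x. f (x, y))))))"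

end

(*
  For fixed y, one integration by parts against exp(-i k1 x) bounds the integral of
  f(x, y) exp(-i k1 x) over [a, b] by (|f(a, y)| + |f(b, y)| + int_a^b |d_x f|) / |k1|; since
  d_x f(., y) has at most N zeros, f(., y) is piecewise monotone and int_a^b |d_x f| is at most
  2 (N + 1) sup |f|. With |f| <= C / |(x, y)| the tails of the x-integral are O(1/r) uniformly in y,
  so F(k1, y) exists as a uniform limit; likewise G(x, k2) by the symmetry x <-> y.

  Integrating by parts in x over a rectangle on which |x| >= n bounds the double integral by
  O(1/n): the boundary terms are oscillatory integrals in y as above, and the remaining term is
  dominated by int dy / (n^2 + y^2) <= pi / n, using |d_x f| <= C / |(x, y)|^2 and the zero bound
  for d_x^2 f. With the symmetric estimate for |y| >= n the truncated double integrals I(m, n)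
  are Cauchy and converge jointly to some L. Finally int_{-m}^m F(k1, y) exp(-i k2 y) dy is the
  limit of I(m, n) as n -> oo by uniform convergence, and an iterated limit of a jointly
  convergent family equals the joint limit; the same holds for G.
*)

theory Submission
  imports Defs
begin

definition fourier_kernel :: "real \<Rightarrow> real \<Rightarrow> complex" where
  "fourier_kernel k t = exp (- \<i> * of_real k * of_real t)"

lemma norm_fourier_kernel [simp]: "norm (fourier_kernel k t) = 1"
  by (simp add: fourier_kernel_def norm_exp_eq_Re)

lemma continuous_on_fourier_kernel [continuous_intros]:
  "continuous_on S g \<Longrightarrow> continuous_on S (\<lambda>x. fourier_kernel k (g x))"
  unfolding fourier_kernel_def by (intro continuous_intros)

lemma fourier_kernel_antiderivative:
  assumes "k \<noteq> 0"
  shows "((\<lambda>t. fourier_kernel k t / (- \<i> * of_real k)) has_vector_derivative fourier_kernel k t) (at t)"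
proof -
  have "((\<lambda>z. exp (- \<i> * of_real k * z) / (- \<i> * of_real k)) has_field_derivative
          exp (- \<i> * of_real k * of_real t)) (at (of_real t))"
    using assms by (auto intro!: derivative_eq_intros)
  then show ?thesis
    unfolding fourier_kernel_def by (rule has_vector_derivative_real_field)
qed

lemma continuous_no_zero_imp_same_sign:
  fixes g :: "real \<Rightarrow> real"
  assumes cont: "continuous_on {a..b} g" and nz: "\<And>t. t \<in> {a<..<b} \<Longrightarrow> g t \<noteq> 0"
  shows "(\<forall>t\<in>{a..b}. 0 \<le> g t) \<or> (\<forall>t\<in>{a..b}. g t \<le> 0)"
proof (rule ccontr)
  assume "\<not> ?thesis"
  then obtain s t where s: "s \<in> {a..b}" "g s < 0" and t: "t \<in> {a..b}" "0 < g t"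
    by force
  have sub: "continuous_on {min s t..max s t} g"
    using s t by (intro continuous_on_subset[OF cont]) auto
  obtain z where z: "min s t \<le> z" "z \<le> max s t" "g z = 0"
  proof (cases "s \<le> t")
    case True
    then show ?thesis using IVT'[of g s 0 t] sub s t that by (auto simp: min_def max_def)
  next
    case False
    then show ?thesis
      using IVT2'[where f=g and a=t and b=s and y=0] sub s t that by (auto simp: min_def max_def)
  qed
  then have "z \<noteq> s" "z \<noteq> t" using s t by auto
  with z s t nz[of z] show False by (auto simp: min_def max_def split: if_splits)
qed

lemma integral_abs_deriv_no_zero:
  fixes g g' :: "real \<Rightarrow> real"
  assumes "a \<le> b" and deriv: "\<And>t. t \<in> {a..b} \<Longrightarrow> (g has_real_derivative g' t) (at t)"
    and cont: "continuous_on {a..b} g'" and nz: "\<And>t. t \<in> {a<..<b} \<Longrightarrow> g' t \<noteq> 0"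
  shows "integral {a..b} (\<lambda>t. \<bar>g' t\<bar>) = \<bar>g b - g a\<bar>"
proof -
  have ftc: "(g' has_integral (g b - g a)) {a..b}"
    using assms(1) deriv
    by (intro fundamental_theorem_of_calculus)
       (auto simp: has_real_derivative_iff_has_vector_derivative intro: has_vector_derivative_at_within)
  from continuous_no_zero_imp_same_sign[OF cont nz] show ?thesis
  proof
    assume pos: "\<forall>t\<in>{a..b}. 0 \<le> g' t"
    have "integral {a..b} (\<lambda>t. \<bar>g' t\<bar>) = integral {a..b} g'"
      by (rule integral_cong) (use pos in auto)
    also have "\<dots> = g b - g a"
      using ftc by (rule integral_unique)
    finally show ?thesis
      using has_integral_nonneg[OF ftc] pos by auto
  next
    assume neg: "\<forall>t\<in>{a..b}. g' t \<le> 0"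
    have "integral {a..b} (\<lambda>t. \<bar>g' t\<bar>) = integral {a..b} (\<lambda>t. - g' t)"
      by (rule integral_cong) (use neg in auto)
    also have "\<dots> = - (g b - g a)"
      using has_integral_neg[OF ftc] by (rule integral_unique)
    finally show ?thesis
      using has_integral_nonneg[OF has_integral_neg[OF ftc]] neg by auto
  qed
qed

lemma card_split_open_interval:
  fixes P :: "real \<Rightarrow> bool"
  assumes "finite {t\<in>{a<..<b}. P t}" and "z \<in> {a<..<b}" and "P z"
  shows "card {t\<in>{a<..<z}. P t} + card {t\<in>{z<..<b}. P t} + 1 \<le> card {t\<in>{a<..<b}. P t}"
proof -
  have sub: "{t\<in>{a<..<z}. P t} \<union> {t\<in>{z<..<b}. P t} \<union> {z} \<subseteq> {t\<in>{a<..<b}. P t}"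
    using assms(2,3) by auto
  have "finite {t\<in>{a<..<z}. P t}" "finite {t\<in>{z<..<b}. P t}"
    using finite_subset[OF sub assms(1)] by auto
  then have "card ({t\<in>{a<..<z}. P t} \<union> {t\<in>{z<..<b}. P t} \<union> {z})
      = card {t\<in>{a<..<z}. P t} + card {t\<in>{z<..<b}. P t} + 1"
    by (subst card_Un_disjoint; auto simp: card_Un_disjoint)+
  with card_mono[OF assms(1) sub] show ?thesis by simp
qed

lemma integral_abs_deriv_le_card_zeros:
  fixes g g' :: "real \<Rightarrow> real"
  assumes "a \<le> b" and "\<And>t. t \<in> {a..b} \<Longrightarrow> (g has_real_derivative g' t) (at t)"
    and "continuous_on {a..b} g'" and "finite {t\<in>{a<..<b}. g' t = 0}"
    and "\<And>t. t \<in> {a..b} \<Longrightarrow> \<bar>g t\<bar> \<le> M"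
  shows "integral {a..b} (\<lambda>t. \<bar>g' t\<bar>) \<le> 2 * (real (card {t\<in>{a<..<b}. g' t = 0}) + 1) * M"
  using assms
proof (induction "card {t\<in>{a<..<b}. g' t = 0}" arbitrary: a b rule: less_induct)
  case less
  note ab = less.prems(1) and deriv = less.prems(2) and cont = less.prems(3)
    and fin = less.prems(4) and bound = less.prems(5)
  define Z where "Z u v = {t\<in>{u<..<v}. g' t = 0}" for u v
  have M: "0 \<le> M" using bound[of a] ab by fastforce
  show ?case
  proof (cases "Z a b = {}")
    case True
    then have "integral {a..b} (\<lambda>t. \<bar>g' t\<bar>) = \<bar>g b - g a\<bar>"
      by (intro integral_abs_deriv_no_zero[OF ab deriv cont]) (auto simp: Z_def)
    also have "\<dots> \<le> 2 * M" using bound[of a] bound[of b] ab by force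
    also have "\<dots> \<le> 2 * (real (card (Z a b)) + 1) * M" using M by (simp add: algebra_simps)
    finally show ?thesis by (simp add: Z_def)
  next
    case False
    then obtain z where z: "z \<in> {a<..<b}" "g' z = 0" by (auto simp: Z_def)
    have card: "card (Z a z) + card (Z z b) + 1 \<le> card (Z a b)"
      unfolding Z_def using card_split_open_interval[OF fin z] .
    have sub: "Z a z \<subseteq> Z a b" "Z z b \<subseteq> Z a b" using z by (auto simp: Z_def)
    then have fin_sub: "finite (Z a z)" "finite (Z z b)"
      using fin finite_subset by (auto simp: Z_def)
    have left: "integral {a..z} (\<lambda>t. \<bar>g' t\<bar>) \<le> 2 * (real (card (Z a z)) + 1) * M"
      using card z fin_sub unfolding Z_def
      by (intro less.hyps) (auto intro: deriv bound continuous_on_subset[OF cont])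
    have right: "integral {z..b} (\<lambda>t. \<bar>g' t\<bar>) \<le> 2 * (real (card (Z z b)) + 1) * M"
      using card z fin_sub unfolding Z_def
      by (intro less.hyps) (auto intro: deriv bound continuous_on_subset[OF cont])
    have "integral {a..b} (\<lambda>t. \<bar>g' t\<bar>) = integral {a..z} (\<lambda>t. \<bar>g' t\<bar>) + integral {z..b} (\<lambda>t. \<bar>g' t\<bar>)"
      using z cont
      by (intro Henstock_Kurzweil_Integration.integral_combine[symmetric]
          integrable_continuous_interval continuous_intros) auto
    also have "\<dots> \<le> 2 * (real (card (Z a z) + card (Z z b) + 1) + 1) * M"
      using left right by (simp add: algebra_simps)
    also have "\<dots> \<le> 2 * (real (card (Z a b)) + 1) * M"
      using card M by (intro mult_right_mono) auto
    finally show ?thesis by (simp add: Z_def)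
  qed
qed

lemma integral_fourier_kernel_by_parts:
  fixes g g' :: "real \<Rightarrow> real"
  assumes "a \<le> b" and "k \<noteq> 0" and deriv: "\<And>t. t \<in> {a..b} \<Longrightarrow> (g has_real_derivative g' t) (at t)"
    and cont: "continuous_on {a..b} g'"
  shows "integral {a..b} (\<lambda>t. of_real (g t) * fourier_kernel k t)
    = (of_real (g b) * fourier_kernel k b - of_real (g a) * fourier_kernel k a
        - integral {a..b} (\<lambda>t. of_real (g' t) * fourier_kernel k t)) / (- \<i> * of_real k)"
proof -
  define c where "c = - \<i> * complex_of_real k"
  define E where "E t = fourier_kernel k t / c" for t
  have c: "c \<noteq> 0" using \<open>k \<noteq> 0\<close> by (simp add: c_def)
  have dE: "(E has_vector_derivative fourier_kernel k t) (at t)" for t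
    unfolding E_def c_def using fourier_kernel_antiderivative[OF \<open>k \<noteq> 0\<close>] .
  have dg: "((\<lambda>t. of_real (g t)) has_vector_derivative of_real (g' t)) (at t)" if "t \<in> {a..b}" for t
    using deriv[OF that] by (rule has_vector_derivative_of_real)
  have cg: "continuous_on {a..b} (\<lambda>t. complex_of_real (g t))"
    using deriv by (intro continuous_on_of_real continuous_at_imp_continuous_on)
      (blast intro: DERIV_continuous)
  have "((\<lambda>t. E t * of_real (g' t)) has_integral integral {a..b} (\<lambda>t. E t * of_real (g' t))) {a..b}"
    unfolding E_def using c
    by (intro integrable_integral integrable_continuous_interval continuous_intros cont) auto
  then have "((\<lambda>t. fourier_kernel k t * of_real (g t)) has_integral
      E b * of_real (g b) - E a * of_real (g a) - integral {a..b} (\<lambda>t. E t * of_real (g' t))) {a..b}"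
    using c by (intro integration_by_parts[OF bounded_bilinear_mult \<open>a \<le> b\<close> _ cg dE dg])
      (auto simp: E_def intro!: continuous_intros)
  moreover have "integral {a..b} (\<lambda>t. E t * of_real (g' t))
      = integral {a..b} (\<lambda>t. of_real (g' t) * fourier_kernel k t) / c"
    unfolding E_def by (simp add: mult.commute)
  ultimately show ?thesis
    by (simp add: integral_unique E_def c_def diff_divide_distrib mult.commute)
qed

lemma norm_integral_fourier_kernel_le:
  fixes g g' :: "real \<Rightarrow> real"
  assumes "a \<le> b" and "k \<noteq> 0" and deriv: "\<And>t. t \<in> {a..b} \<Longrightarrow> (g has_real_derivative g' t) (at t)"
    and cont: "continuous_on {a..b} g'"
    and zeros: "finite {t\<in>{a<..<b}. g' t = 0}" "card {t\<in>{a<..<b}. g' t = 0} \<le> N"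
    and bound: "\<And>t. t \<in> {a..b} \<Longrightarrow> \<bar>g t\<bar> \<le> M"
  shows "norm (integral {a..b} (\<lambda>t. of_real (g t) * fourier_kernel k t)) \<le> (2 * real N + 4) * M / \<bar>k\<bar>"
proof -
  define J where "J = integral {a..b} (\<lambda>t. of_real (g' t) * fourier_kernel k t)"
  have M: "0 \<le> M" using bound[of a] \<open>a \<le> b\<close> by fastforce
  have "norm J \<le> integral {a..b} (\<lambda>t. \<bar>g' t\<bar>)"
    unfolding J_def
    by (intro integral_norm_bound_integral integrable_continuous_interval continuous_intros cont)
      (auto simp: norm_mult)
  also have "\<dots> \<le> 2 * (real (card {t\<in>{a<..<b}. g' t = 0}) + 1) * M"
    by (rule integral_abs_deriv_le_card_zeros[OF \<open>a \<le> b\<close> deriv cont zeros(1) bound])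
  also have "\<dots> \<le> 2 * (real N + 1) * M"
    using zeros(2) M by (intro mult_right_mono) auto
  finally have J: "norm J \<le> 2 * (real N + 1) * M" .
  have "norm (of_real (g b) * fourier_kernel k b - of_real (g a) * fourier_kernel k a - J)
      \<le> \<bar>g b\<bar> + \<bar>g a\<bar> + norm J"
    using norm_triangle_ineq4[of "of_real (g b) * fourier_kernel k b - of_real (g a) * fourier_kernel k a" J]
      norm_triangle_ineq4[of "of_real (g b) * fourier_kernel k b" "of_real (g a) * fourier_kernel k a"]
    by (simp add: norm_mult)
  also have "\<dots> \<le> (2 * real N + 4) * M"
    using J bound[of a] bound[of b] \<open>a \<le> b\<close> by (auto simp: algebra_simps)
  moreover have "integral {a..b} (\<lambda>t. of_real (g t) * fourier_kernel k t)
      = (of_real (g b) * fourier_kernel k b - of_real (g a) * fourier_kernel k a - J) / (- \<i> * of_real k)"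
    unfolding J_def by (rule integral_fourier_kernel_by_parts[OF \<open>a \<le> b\<close> \<open>k \<noteq> 0\<close> deriv cont])
  ultimately show ?thesis
    by (simp add: norm_divide norm_mult divide_right_mono)
qed

lemma continuous_on_integral_param:
  fixes \<phi> :: "real \<times> real \<Rightarrow> 'a::banach"
  assumes "continuous_on UNIV \<phi>"
  shows "continuous_on UNIV (\<lambda>y. integral {a..b} (\<lambda>x. \<phi> (x, y)))"
proof -
  have "continuous_on (UNIV \<times> cbox a b) (\<lambda>(y, x). \<phi> (x, y))"
    using continuous_on_compose2[OF assms continuous_on_swap] by (simp add: prod.swap_def split_def)
  from integral_continuous_on_param[OF this] show ?thesis by simp
qed

lemma continuous_on_section_x:
  "continuous_on UNIV \<phi> \<Longrightarrow> continuous_on S (\<lambda>x. \<phi> (x, y))"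
  by (rule continuous_on_compose2[of UNIV \<phi>]) (auto intro!: continuous_intros)

lemma continuous_on_section_y:
  "continuous_on UNIV \<phi> \<Longrightarrow> continuous_on S (\<lambda>y. \<phi> (x, y))"
  by (rule continuous_on_compose2[of UNIV \<phi>]) (auto intro!: continuous_intros)

lemma integral_swap_continuous_interval:
  fixes \<phi> :: "real \<times> real \<Rightarrow> 'a::banach"
  assumes "continuous_on UNIV \<phi>"
  shows "integral {c..d} (\<lambda>y. integral {a..b} (\<lambda>x. \<phi> (x, y)))
    = integral {a..b} (\<lambda>x. integral {c..d} (\<lambda>y. \<phi> (x, y)))"
proof -
  have "continuous_on (cbox (a, c) (b, d)) (\<lambda>(x, y). \<phi> (x, y))"
    using continuous_on_subset[OF assms] by simp
  from integral_swap_continuous[OF this] show ?thesis by simp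
qed

lemma integral_diff_symmetric_intervals:
  fixes g :: "real \<Rightarrow> 'a::banach"
  assumes "g integrable_on {-r'..r'}" and "0 \<le> r" and "r \<le> r'"
  shows "integral {-r'..r'} g - integral {-r..r} g = integral {-r'..-r} g + integral {r..r'} g"
proof -
  have "integral {-r'..r} g + integral {r..r'} g = integral {-r'..r'} g"
    using assms by (intro Henstock_Kurzweil_Integration.integral_combine) auto
  moreover have "integral {-r'..-r} g + integral {-r..r} g = integral {-r'..r} g"
    using assms
    by (intro Henstock_Kurzweil_Integration.integral_combine integrable_subinterval_real[OF assms(1)]) auto
  ultimately show ?thesis by (simp add: algebra_simps)
qed

lemma double_integral_diff_inner:
  fixes \<Phi> :: "real \<times> real \<Rightarrow> 'a::banach"
  assumes cont: "continuous_on UNIV \<Phi>" and "0 \<le> n" and "n \<le> n'"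
  shows "integral {c..d} (\<lambda>y. integral {-n'..n'} (\<lambda>x. \<Phi> (x, y)))
      - integral {c..d} (\<lambda>y. integral {-n..n} (\<lambda>x. \<Phi> (x, y)))
    = integral {c..d} (\<lambda>y. integral {-n'..-n} (\<lambda>x. \<Phi> (x, y)))
      + integral {c..d} (\<lambda>y. integral {n..n'} (\<lambda>x. \<Phi> (x, y)))"
proof -
  have int: "(\<lambda>y. integral {a..b} (\<lambda>x. \<Phi> (x, y))) integrable_on {c..d}" for a b
    by (intro integrable_continuous_interval continuous_on_subset[OF continuous_on_integral_param[OF cont]])
      auto
  have "integral {c..d} (\<lambda>y. integral {-n'..n'} (\<lambda>x. \<Phi> (x, y)))
      - integral {c..d} (\<lambda>y. integral {-n..n} (\<lambda>x. \<Phi> (x, y)))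
    = integral {c..d} (\<lambda>y. integral {-n'..n'} (\<lambda>x. \<Phi> (x, y)) - integral {-n..n} (\<lambda>x. \<Phi> (x, y)))"
    by (rule integral_diff[symmetric, OF int int])
  also have "\<dots> = integral {c..d} (\<lambda>y. integral {-n'..-n} (\<lambda>x. \<Phi> (x, y)) + integral {n..n'} (\<lambda>x. \<Phi> (x, y)))"
    using assms(2,3)
    by (intro integral_cong integral_diff_symmetric_intervals integrable_continuous_interval
        continuous_on_section_x[OF cont]) auto
  also have "\<dots> = integral {c..d} (\<lambda>y. integral {-n'..-n} (\<lambda>x. \<Phi> (x, y)))
      + integral {c..d} (\<lambda>y. integral {n..n'} (\<lambda>x. \<Phi> (x, y)))"
    by (rule integral_add[OF int int])
  finally show ?thesis .
qed

lemma double_integral_diff_outer: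
  fixes \<Phi> :: "real \<times> real \<Rightarrow> 'a::banach"
  assumes cont: "continuous_on UNIV \<Phi>" and "0 \<le> m" and "m \<le> m'"
  shows "integral {-m'..m'} (\<lambda>y. integral {a..b} (\<lambda>x. \<Phi> (x, y)))
      - integral {-m..m} (\<lambda>y. integral {a..b} (\<lambda>x. \<Phi> (x, y)))
    = integral {a..b} (\<lambda>x. integral {-m'..-m} (\<lambda>y. \<Phi> (x, y)))
      + integral {a..b} (\<lambda>x. integral {m..m'} (\<lambda>y. \<Phi> (x, y)))"
proof -
  have "integral {-m'..m'} (\<lambda>y. integral {a..b} (\<lambda>x. \<Phi> (x, y)))
      - integral {-m..m} (\<lambda>y. integral {a..b} (\<lambda>x. \<Phi> (x, y)))
    = integral {-m'..-m} (\<lambda>y. integral {a..b} (\<lambda>x. \<Phi> (x, y)))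
      + integral {m..m'} (\<lambda>y. integral {a..b} (\<lambda>x. \<Phi> (x, y)))"
    using assms(2,3)
    by (intro integral_diff_symmetric_intervals integrable_continuous_interval
        continuous_on_subset[OF continuous_on_integral_param[OF cont]]) auto
  then show ?thesis
    by (simp only: integral_swap_continuous_interval[OF cont])
qed

lemma integral_inverse_sum_sq_le:
  fixes n :: real
  assumes "0 < n"
  shows "integral {c..d} (\<lambda>y. 1 / (n\<^sup>2 + y\<^sup>2)) \<le> pi / n"
proof (cases "c \<le> d")
  case False
  then show ?thesis using assms by simp
next
  case True
  have "((\<lambda>y. 1 / (n\<^sup>2 + y\<^sup>2)) has_integral arctan (d / n) / n - arctan (c / n) / n) {c..d}"
  proof (rule fundamental_theorem_of_calculus[OF True])
    fix y
    have "0 < n * (n * (n * n)) + n * (n * (y * y))" using assms by (simp add: add_pos_nonneg)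
    then have "((\<lambda>y. arctan (y / n) / n) has_real_derivative 1 / (n\<^sup>2 + y\<^sup>2)) (at y)"
      using assms by (auto intro!: derivative_eq_intros simp: field_simps power2_eq_square)
    then show "((\<lambda>y. arctan (y / n) / n) has_vector_derivative 1 / (n\<^sup>2 + y\<^sup>2)) (at y within {c..d})"
      by (simp add: has_real_derivative_iff_has_vector_derivative has_vector_derivative_at_within)
  qed
  then have "integral {c..d} (\<lambda>y. 1 / (n\<^sup>2 + y\<^sup>2)) = (arctan (d / n) - arctan (c / n)) / n"
    by (simp add: integral_unique diff_divide_distrib)
  also have "\<dots> \<le> pi / n"
    using arctan_bounded[of "d / n"] arctan_bounded[of "c / n"] assms by (intro divide_right_mono) auto
  finally show ?thesis .
qed

lemma norm_rectangle_integral_le_by_parts: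
  fixes h hx :: "real \<times> real \<Rightarrow> real" and B :: "real \<Rightarrow> real"
  assumes "a \<le> b" and "k1 \<noteq> 0"
    and ch: "continuous_on UNIV h" and chx: "continuous_on UNIV hx"
    and dx: "\<And>x y. ((\<lambda>s. h (s, y)) has_real_derivative hx (x, y)) (at x)"
    and edge: "\<And>z. z \<in> {a, b} \<Longrightarrow>
      norm (integral {c..d} (\<lambda>y. of_real (h (z, y)) * fourier_kernel k2 y)) \<le> A"
    and inner: "\<And>y. y \<in> {c..d} \<Longrightarrow>
      norm (integral {a..b} (\<lambda>x. of_real (hx (x, y)) * fourier_kernel k1 x)) \<le> B y"
    and "B integrable_on {c..d}"
  shows "norm (integral {c..d} (\<lambda>y. integral {a..b}
      (\<lambda>x. of_real (h (x, y)) * fourier_kernel k1 x * fourier_kernel k2 y)))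
    \<le> (2 * A + integral {c..d} B) / \<bar>k1\<bar>"
proof -
  define K W where "K = fourier_kernel k1" and "W = fourier_kernel k2"
  define P where "P y = integral {a..b} (\<lambda>x. of_real (hx (x, y)) * K x)" for y
  define H where "H z = integral {c..d} (\<lambda>y. of_real (h (z, y)) * W y)" for z
  define Q where "Q = integral {c..d} (\<lambda>y. P y * W y)"
  have by_parts: "integral {a..b} (\<lambda>x. of_real (h (x, y)) * K x * W y)
      = (K b * (of_real (h (b, y)) * W y) - K a * (of_real (h (a, y)) * W y) - P y * W y)
        / (- \<i> * of_real k1)" for y
    using integral_fourier_kernel_by_parts[OF \<open>a \<le> b\<close> \<open>k1 \<noteq> 0\<close> dx continuous_on_section_x[OF chx]]
    by (simp add: K_def P_def algebra_simps)
  have "continuous_on UNIV (\<lambda>p. of_real (hx p) * K (fst p))"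
    unfolding K_def by (intro continuous_intros continuous_on_compose2[OF chx]) auto
  from continuous_on_integral_param[OF this] have cP: "continuous_on UNIV P"
    by (simp add: P_def)
  have int_P: "((\<lambda>y. P y * W y) has_integral Q) {c..d}"
    unfolding Q_def W_def
    by (intro integrable_integral integrable_continuous_interval continuous_intros
        continuous_on_subset[OF cP]) auto
  have int_H: "((\<lambda>y. of_real (h (z, y)) * W y) has_integral H z) {c..d}" for z
    unfolding H_def W_def
    by (intro integrable_integral integrable_continuous_interval continuous_intros continuous_on_section_y ch)
  have "((\<lambda>y. integral {a..b} (\<lambda>x. of_real (h (x, y)) * K x * W y)) has_integral
      (K b * H b - K a * H a - Q) / (- \<i> * of_real k1)) {c..d}"
    unfolding by_parts by (intro has_integral_divide has_integral_diff has_integral_mult_right int_H int_P)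
  then have "integral {c..d} (\<lambda>y. integral {a..b} (\<lambda>x. of_real (h (x, y)) * K x * W y))
      = (K b * H b - K a * H a - Q) / (- \<i> * of_real k1)"
    by (rule integral_unique)
  moreover have "norm Q \<le> integral {c..d} B"
    unfolding Q_def using int_P inner \<open>B integrable_on {c..d}\<close>
    by (intro integral_norm_bound_integral) (auto simp: norm_mult W_def P_def K_def)
  moreover have "norm (H a) \<le> A" "norm (H b) \<le> A"
    using edge by (auto simp: H_def W_def)
  moreover have "norm (K b * H b - K a * H a - Q) \<le> norm (H b) + norm (H a) + norm Q"
    using norm_triangle_ineq4[of "K b * H b - K a * H a" Q] norm_triangle_ineq4[of "K b * H b" "K a * H a"]
    by (simp add: norm_mult K_def)
  ultimately show ?thesis
    by (simp add: K_def W_def norm_divide norm_mult divide_right_mono)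
qed

lemma tendsto_of_uniformly_Cauchy:
  fixes f :: "'b \<Rightarrow> 'a::complete_space"
  assumes "\<And>e. 0 < e \<Longrightarrow> \<exists>P. eventually P F \<and> (\<forall>x y. P x \<and> P y \<longrightarrow> dist (f x) (f y) < e)"
  shows "\<exists>l. (f \<longlongrightarrow> l) F"
proof -
  have "cauchy_filter (filtermap f F)"
    using assms by (simp add: cauchy_filter_metric_filtermap)
  then have "convergent_filter (filtermap f F)"
    by (rule cauchy_filter_convergent)
  then show ?thesis
    by (auto simp: convergent_filter_iff filterlim_def)
qed

lemma tendsto_at_top_of_Cauchy_rate:
  fixes \<phi> :: "real \<Rightarrow> 'a::banach"
  assumes rate: "\<And>r r'. 1 < r \<Longrightarrow> r \<le> r' \<Longrightarrow> norm (\<phi> r' - \<phi> r) \<le> B / r"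
  shows "\<exists>l. (\<phi> \<longlongrightarrow> l) at_top \<and> (\<forall>r>1. norm (\<phi> r - l) \<le> B / r)"
proof -
  have "\<exists>l. (\<phi> \<longlongrightarrow> l) at_top"
  proof (rule tendsto_of_uniformly_Cauchy)
    fix e :: real assume "0 < e"
    have "dist (\<phi> r) (\<phi> r') < e" if "max 1 (B / e) < r" "max 1 (B / e) < r'" for r r'
    proof -
      have small: "B / s < e" if "max 1 (B / e) < s" for s
        using that \<open>0 < e\<close> by (simp add: field_simps)
      show ?thesis
      proof (cases "r \<le> r'")
        case True
        then show ?thesis using rate[of r r'] small[of r] that by (simp add: dist_norm norm_minus_commute)
      next
        case False
        then show ?thesis using rate[of r' r] small[of r'] that by (simp add: dist_norm)
      qed
    qed
    then show "\<exists>P. eventually P at_top \<and> (\<forall>r r'. P r \<and> P r' \<longrightarrow> dist (\<phi> r) (\<phi> r') < e)"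
      using eventually_gt_at_top[of "max 1 (B / e)"]
      by (intro exI[of _ "\<lambda>r. max 1 (B / e) < r"]) auto
  qed
  then obtain l where l: "(\<phi> \<longlongrightarrow> l) at_top" by blast
  have "norm (l - \<phi> r) \<le> B / r" if "1 < r" for r
  proof (rule tendsto_upperbound)
    show "((\<lambda>r'. norm (\<phi> r' - \<phi> r)) \<longlongrightarrow> norm (l - \<phi> r)) at_top"
      by (intro tendsto_intros l)
    show "\<forall>\<^sub>F r' in at_top. norm (\<phi> r' - \<phi> r) \<le> B / r"
      using eventually_ge_at_top[of r] by eventually_elim (rule rate[OF that])
  qed simp
  with l show ?thesis by (auto simp: norm_minus_commute)
qed

lemma prod_at_top_tendsto_of_Cauchy_rate:
  fixes I :: "real \<Rightarrow> real \<Rightarrow> 'a::banach"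
  assumes rate1: "\<And>m n n'. 1 < n \<Longrightarrow> n \<le> n' \<Longrightarrow> norm (I m n' - I m n) \<le> A1 / n"
    and rate2: "\<And>m m' n. 1 < m \<Longrightarrow> m \<le> m' \<Longrightarrow> norm (I m' n - I m n) \<le> A2 / m"
  shows "\<exists>L. ((\<lambda>(m, n). I m n) \<longlongrightarrow> L) (at_top \<times>\<^sub>F at_top)"
proof (rule tendsto_of_uniformly_Cauchy)
  fix e :: real assume "0 < e"
  define R where "R = max 1 (max (2 * A1 / e) (2 * A2 / e))"
  have small: "A1 / s < e / 2" "A2 / s < e / 2" if "R < s" for s
    using that \<open>0 < e\<close> by (simp_all add: R_def field_simps)
  have R: "1 \<le> R" by (simp add: R_def)
  have close1: "norm (I m n' - I m n) < e / 2" if "R < n" "R < n'" for m n n'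
  proof (cases "n \<le> n'")
    case True
    then have "norm (I m n' - I m n) \<le> A1 / n" using that R by (intro rate1) auto
    with small(1)[OF that(1)] show ?thesis by linarith
  next
    case False
    then have "norm (I m n - I m n') \<le> A1 / n'" using that R by (intro rate1) auto
    with small(1)[OF that(2)] norm_minus_commute[of "I m n" "I m n'"] show ?thesis by linarith
  qed
  have close2: "norm (I m' n - I m n) < e / 2" if "R < m" "R < m'" for m m' n
  proof (cases "m \<le> m'")
    case True
    then have "norm (I m' n - I m n) \<le> A2 / m" using that R by (intro rate2) auto
    with small(2)[OF that(1)] show ?thesis by linarith
  next
    case False
    then have "norm (I m n - I m' n) \<le> A2 / m'" using that R by (intro rate2) auto
    with small(2)[OF that(2)] norm_minus_commute[of "I m n" "I m' n"] show ?thesis by linarith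
  qed
  have "dist (I m n) (I m' n') < e" if "R < m" "R < n" "R < m'" "R < n'" for m n m' n'
    using norm_triangle_lt[OF add_strict_mono[OF close1[of n n' m] close2[of m m' n']]] that
    by (simp add: dist_norm norm_minus_commute)
  then show "\<exists>P. eventually P (at_top \<times>\<^sub>F at_top) \<and>
      (\<forall>p q. P p \<and> P q \<longrightarrow> dist ((\<lambda>(m, n). I m n) p) ((\<lambda>(m, n). I m n) q) < e)"
    by (intro exI[of _ "\<lambda>(m, n). R < m \<and> R < n"])
      (auto simp: eventually_prod_filter intro!: exI[of _ "\<lambda>m. R < m"] eventually_gt_at_top)
qed

lemma tendsto_iterated_of_prod_filter:
  fixes I :: "'b \<Rightarrow> 'c \<Rightarrow> 'a::metric_space"
  assumes lim: "((\<lambda>(m, n). I m n) \<longlongrightarrow> L) (F \<times>\<^sub>F G)"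
    and inner: "\<And>m. (I m \<longlongrightarrow> J m) G" and "G \<noteq> bot"
  shows "(J \<longlongrightarrow> L) F"
proof (rule tendstoI)
  fix e :: real assume "0 < e"
  then have "\<forall>\<^sub>F p in F \<times>\<^sub>F G. dist ((\<lambda>(m, n). I m n) p) L < e / 2"
    using lim by (intro tendstoD) auto
  then obtain Pf Pg where "eventually Pf F" "eventually Pg G"
    and P: "\<And>m n. Pf m \<Longrightarrow> Pg n \<Longrightarrow> dist (I m n) L < e / 2"
    unfolding eventually_prod_filter by auto
  have "dist (J m) L \<le> e / 2" if "Pf m" for m
  proof (rule tendsto_upperbound[OF _ _ \<open>G \<noteq> bot\<close>])
    show "((\<lambda>n. dist (I m n) L) \<longlongrightarrow> dist (J m) L) G"
      by (intro tendsto_intros inner)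
    show "\<forall>\<^sub>F n in G. dist (I m n) L \<le> e / 2"
      using \<open>eventually Pg G\<close> by eventually_elim (use P that in force)
  qed
  then have "dist (J m) L < e" if "Pf m" for m
    using that \<open>0 < e\<close> by fastforce
  with \<open>eventually Pf F\<close> show "\<forall>\<^sub>F m in F. dist (J m) L < e"
    by (auto elim: eventually_mono)
qed

lemma tendsto_prod_filter_swap:
  assumes "((\<lambda>(m, n). I m n) \<longlongrightarrow> L) (F \<times>\<^sub>F G)"
  shows "((\<lambda>(n, m). I m n) \<longlongrightarrow> L) (G \<times>\<^sub>F F)"
  using assms unfolding prod_filter_commute[of F G] filterlim_filtermap
  by (simp add: case_prod_unfold)

lemma uniform_limit_at_top_of_rate:
  fixes \<phi> :: "real \<Rightarrow> 'b \<Rightarrow> 'a::metric_space"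
  assumes "\<And>n x. 1 < n \<Longrightarrow> x \<in> S \<Longrightarrow> dist (\<phi> n x) (F x) \<le> B / n"
  shows "uniform_limit S \<phi> F at_top"
  unfolding uniform_limit_iff
proof (intro allI impI)
  fix e :: real assume "0 < e"
  have "dist (\<phi> n x) (F x) < e" if "max 1 (B / e) < n" "x \<in> S" for n x
  proof -
    have "B / n < e" using that \<open>0 < e\<close> by (simp add: field_simps)
    with assms[of n x] that show ?thesis by simp
  qed
  then show "\<forall>\<^sub>F n in at_top. \<forall>x\<in>S. dist (\<phi> n x) (F x) < e"
    using eventually_gt_at_top[of "max 1 (B / e)"] by (auto elim: eventually_mono)
qed

lemma smooth2_continuous: "smooth2 f \<Longrightarrow> g \<in> iter_partials f \<Longrightarrow> continuous_on UNIV g"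
  unfolding smooth2_def by blast

lemma smooth2_has_real_derivative_x:
  "smooth2 f \<Longrightarrow> g \<in> iter_partials f \<Longrightarrow> ((\<lambda>s. g (s, y)) has_real_derivative pdx g (x, y)) (at x)"
  unfolding smooth2_def pdx_def by (simp add: DERIV_deriv_iff_real_differentiable)

lemma smooth2_has_real_derivative_y:
  "smooth2 f \<Longrightarrow> g \<in> iter_partials f \<Longrightarrow> ((\<lambda>t. g (x, t)) has_real_derivative pdy g (x, y)) (at y)"
  unfolding smooth2_def pdy_def by (simp add: DERIV_deriv_iff_real_differentiable)

lemma pdx_swap: "pdx (g \<circ> prod.swap) = pdy g \<circ> prod.swap"
  by (simp add: fun_eq_iff pdx_def pdy_def)

lemma pdy_swap: "pdy (g \<circ> prod.swap) = pdx g \<circ> prod.swap"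
  by (simp add: fun_eq_iff pdx_def pdy_def)

lemma iter_partials_swap:
  "h \<in> iter_partials (f \<circ> prod.swap) \<Longrightarrow> \<exists>g\<in>iter_partials f. h = g \<circ> prod.swap"
proof (induction rule: iter_partials.induct)
  case base
  then show ?case using iter_partials.base by blast
next
  case (dx h)
  then show ?case using iter_partials.dy pdx_swap by metis
next
  case (dy h)
  then show ?case using iter_partials.dx pdy_swap by metis
qed

lemma smooth2_swap: "smooth2 f \<Longrightarrow> smooth2 (f \<circ> prod.swap)"
  unfolding smooth2_def
proof (intro ballI conjI allI)
  fix h assume smooth: "\<forall>g\<in>iter_partials f. continuous_on UNIV g \<and>
      (\<forall>x y. (\<lambda>s. g (s, y)) differentiable at x \<and> (\<lambda>t. g (x, t)) differentiable at y)"
    and "h \<in> iter_partials (f \<circ> prod.swap)"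
  then obtain g where g: "g \<in> iter_partials f" and h: "h = g \<circ> prod.swap"
    using iter_partials_swap by blast
  show "continuous_on UNIV h"
    unfolding h using smooth g by (intro continuous_on_compose continuous_intros) auto
  show "(\<lambda>s. h (s, y)) differentiable at x" "(\<lambda>t. h (x, t)) differentiable at y" for x y
    using smooth g by (auto simp: h)
qed

lemma normal_swap:
  assumes "normal f"
  shows "normal (f \<circ> prod.swap)"
proof -
  have norm_swap: "norm (prod.swap p) = norm p" for p :: "real \<times> real"
    by (cases p) (simp add: norm_Pair add.commute)
  have decrease: "very_moderate_decrease (g \<circ> prod.swap)" if "very_moderate_decrease g" for g
    using that unfolding very_moderate_decrease_def by (metis comp_apply norm_swap)
  have moderate: "moderate_decrease (g \<circ> prod.swap)" if "moderate_decrease g" for g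
    using that unfolding moderate_decrease_def by (metis comp_apply norm_swap)
  from assms show ?thesis
    unfolding normal_def pdx_swap pdy_swap by (auto intro: decrease moderate)
qed

lemma zeros_bounded_restrict:
  assumes "zeros_bounded N g"
  shows "finite {t\<in>S. g t = 0}" "card {t\<in>S. g t = 0} \<le> N"
proof -
  have sub: "{t\<in>S. g t = 0} \<subseteq> {t. g t = 0}" by blast
  from assms show "finite {t\<in>S. g t = 0}" "card {t\<in>S. g t = 0} \<le> N"
    unfolding zeros_bounded_def using finite_subset[OF sub] card_mono[OF _ sub] by auto
qed

lemma inverse_decay_on_strip:
  fixes g :: "real \<times> real \<Rightarrow> real"
  assumes decay: "\<And>p. 1 < norm p \<Longrightarrow> \<bar>g p\<bar> \<le> C / norm p" and "0 \<le> C" "1 < n" "n \<le> \<bar>x\<bar>"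
  shows "\<bar>g (x, y)\<bar> \<le> C / n"
proof -
  have "n \<le> norm (x, y)"
    using \<open>n \<le> \<bar>x\<bar>\<close> by (metis fst_conv norm_fst_le real_norm_def order.trans)
  then have "\<bar>g (x, y)\<bar> \<le> C / norm (x, y)"
    using decay \<open>1 < n\<close> by simp
  also have "\<dots> \<le> C / n"
    using \<open>n \<le> norm (x, y)\<close> \<open>0 \<le> C\<close> \<open>1 < n\<close> by (intro divide_left_mono mult_pos_pos) auto
  finally show ?thesis .
qed

lemma inverse_sq_decay_on_strip:
  fixes g :: "real \<times> real \<Rightarrow> real"
  assumes decay: "\<And>p. 1 < norm p \<Longrightarrow> \<bar>g p\<bar> \<le> C / (norm p)\<^sup>2" and "0 \<le> C" "1 < n" "n \<le> \<bar>x\<bar>"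
  shows "\<bar>g (x, y)\<bar> \<le> C / (n\<^sup>2 + y\<^sup>2)"
proof -
  have "n \<le> norm (x, y)"
    using \<open>n \<le> \<bar>x\<bar>\<close> by (metis fst_conv norm_fst_le real_norm_def order.trans)
  then have "\<bar>g (x, y)\<bar> \<le> C / (norm (x, y))\<^sup>2"
    using decay \<open>1 < n\<close> by simp
  also have "\<dots> \<le> C / (n\<^sup>2 + y\<^sup>2)"
  proof (intro divide_left_mono mult_pos_pos)
    show "n\<^sup>2 + y\<^sup>2 \<le> (norm (x, y))\<^sup>2"
      using \<open>n \<le> \<bar>x\<bar>\<close> \<open>1 < n\<close> by (simp add: norm_Pair abs_le_square_iff[symmetric])
    show "0 < n\<^sup>2 + y\<^sup>2" using \<open>1 < n\<close> by (simp add: add_pos_nonneg)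
  qed (use \<open>0 \<le> C\<close> \<open>n \<le> norm (x, y)\<close> \<open>1 < n\<close> in auto)
  finally show ?thesis .
qed

lemma pdx_section: "(\<lambda>s. pdx g (s, y)) = deriv (\<lambda>s. g (s, y))"
  by (simp add: pdx_def fun_eq_iff)

lemma pdy_section: "(\<lambda>t. pdy g (x, t)) = deriv (\<lambda>t. g (x, t))"
  by (simp add: pdy_def fun_eq_iff)

lemma normal_decay: "normal f \<Longrightarrow> \<exists>C>0. \<forall>p. 1 < norm p \<longrightarrow> \<bar>f p\<bar> \<le> C / norm p"
  by (simp add: normal_def very_moderate_decrease_def)

lemma normal_pdx_decay: "normal f \<Longrightarrow> \<exists>C>0. \<forall>p. 1 < norm p \<longrightarrow> \<bar>pdx f p\<bar> \<le> C / (norm p)\<^sup>2"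
  by (simp add: normal_def moderate_decrease_def)

lemma normal_zeros_pdx: "normal f \<Longrightarrow> \<exists>N. \<forall>y. zeros_bounded N (\<lambda>s. pdx f (s, y))"
  unfolding normal_def pdx_section by blast

lemma normal_zeros_pdx_pdx: "normal f \<Longrightarrow> \<exists>N. \<forall>y. zeros_bounded N (\<lambda>s. pdx (pdx f) (s, y))"
  unfolding normal_def pdx_section by blast

lemma normal_zeros_pdy: "normal f \<Longrightarrow> \<exists>N. \<forall>x. zeros_bounded N (\<lambda>t. pdy f (x, t))"
  unfolding normal_def pdy_section by blast

lemma normal_integral_x_tail_le:
  assumes smooth: "smooth2 f" and "normal f" and "k \<noteq> 0"
  obtains B where "\<And>a b y n. a \<le> b \<Longrightarrow> 1 < n \<Longrightarrow> (\<And>x. x \<in> {a..b} \<Longrightarrow> n \<le> \<bar>x\<bar>) \<Longrightarrow>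
    norm (integral {a..b} (\<lambda>x. of_real (f (x, y)) * fourier_kernel k x)) \<le> B / n"
proof -
  obtain C where "0 < C" and decay: "\<And>p. 1 < norm p \<Longrightarrow> \<bar>f p\<bar> \<le> C / norm p"
    using normal_decay[OF \<open>normal f\<close>] by blast
  obtain N where zeros: "\<And>y. zeros_bounded N (\<lambda>s. pdx f (s, y))"
    using normal_zeros_pdx[OF \<open>normal f\<close>] by blast
  have "norm (integral {a..b} (\<lambda>x. of_real (f (x, y)) * fourier_kernel k x))
      \<le> ((2 * real N + 4) * C / \<bar>k\<bar>) / n"
    if "a \<le> b" "1 < n" and strip: "\<And>x. x \<in> {a..b} \<Longrightarrow> n \<le> \<bar>x\<bar>" for a b y n
  proof -
    have "\<bar>f (x, y)\<bar> \<le> C / n" if "x \<in> {a..b}" for x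
      using \<open>0 < C\<close> \<open>1 < n\<close> strip[OF that] by (intro inverse_decay_on_strip[OF decay]) auto
    then have "norm (integral {a..b} (\<lambda>x. of_real (f (x, y)) * fourier_kernel k x))
        \<le> (2 * real N + 4) * (C / n) / \<bar>k\<bar>"
      using \<open>a \<le> b\<close> \<open>k \<noteq> 0\<close> zeros_bounded_restrict[OF zeros, where S="{a<..<b}"]
        smooth2_has_real_derivative_x[OF smooth iter_partials.base]
        continuous_on_section_x[OF smooth2_continuous[OF smooth iter_partials.dx[OF iter_partials.base]]]
      by (intro norm_integral_fourier_kernel_le[where g'="\<lambda>s. pdx f (s, y)"]) auto
    then show ?thesis by (simp add: mult.commute)
  qed
  then show ?thesis by (rule that)
qed

lemma normal_integral_y_le:
  assumes smooth: "smooth2 f" and "normal f" and "k \<noteq> 0"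
  obtains B where "\<And>c d z n. 1 < n \<Longrightarrow> n \<le> \<bar>z\<bar> \<Longrightarrow>
    norm (integral {c..d} (\<lambda>y. of_real (f (z, y)) * fourier_kernel k y)) \<le> B / n"
proof -
  obtain C where "0 < C" and decay: "\<And>p. 1 < norm p \<Longrightarrow> \<bar>f p\<bar> \<le> C / norm p"
    using normal_decay[OF \<open>normal f\<close>] by blast
  obtain N where zeros: "\<And>x. zeros_bounded N (\<lambda>t. pdy f (x, t))"
    using normal_zeros_pdy[OF \<open>normal f\<close>] by blast
  have "norm (integral {c..d} (\<lambda>y. of_real (f (z, y)) * fourier_kernel k y))
      \<le> ((2 * real N + 4) * C / \<bar>k\<bar>) / n" if "1 < n" "n \<le> \<bar>z\<bar>" for c d z n
  proof (cases "c \<le> d")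
    case True
    have "\<bar>f (z, y)\<bar> \<le> C / n" for y
      using \<open>0 < C\<close> that by (intro inverse_decay_on_strip[OF decay]) auto
    then have "norm (integral {c..d} (\<lambda>y. of_real (f (z, y)) * fourier_kernel k y))
        \<le> (2 * real N + 4) * (C / n) / \<bar>k\<bar>"
      using True \<open>k \<noteq> 0\<close> zeros_bounded_restrict[OF zeros, where S="{c<..<d}"]
        smooth2_has_real_derivative_y[OF smooth iter_partials.base]
        continuous_on_section_y[OF smooth2_continuous[OF smooth iter_partials.dy[OF iter_partials.base]]]
      by (intro norm_integral_fourier_kernel_le[where g'="\<lambda>t. pdy f (z, t)"]) auto
    then show ?thesis by (simp add: mult.commute)
  qed (use \<open>0 < C\<close> \<open>1 < n\<close> in simp)
  then show ?thesis by (rule that)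
qed

lemma normal_pdx_integral_x_tail_le:
  assumes smooth: "smooth2 f" and "normal f" and "k \<noteq> 0"
  obtains B where "0 \<le> B" "\<And>a b y n. a \<le> b \<Longrightarrow> 1 < n \<Longrightarrow> (\<And>x. x \<in> {a..b} \<Longrightarrow> n \<le> \<bar>x\<bar>) \<Longrightarrow>
    norm (integral {a..b} (\<lambda>x. of_real (pdx f (x, y)) * fourier_kernel k x)) \<le> B / (n\<^sup>2 + y\<^sup>2)"
proof -
  obtain C where "0 < C" and decay: "\<And>p. 1 < norm p \<Longrightarrow> \<bar>pdx f p\<bar> \<le> C / (norm p)\<^sup>2"
    using normal_pdx_decay[OF \<open>normal f\<close>] by blast
  obtain N where zeros: "\<And>y. zeros_bounded N (\<lambda>s. pdx (pdx f) (s, y))"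
    using normal_zeros_pdx_pdx[OF \<open>normal f\<close>] by blast
  have pdx_in: "pdx f \<in> iter_partials f" and pdxx_in: "pdx (pdx f) \<in> iter_partials f"
    by (auto intro: iter_partials.intros)
  have "norm (integral {a..b} (\<lambda>x. of_real (pdx f (x, y)) * fourier_kernel k x))
      \<le> ((2 * real N + 4) * C / \<bar>k\<bar>) / (n\<^sup>2 + y\<^sup>2)"
    if "a \<le> b" "1 < n" and strip: "\<And>x. x \<in> {a..b} \<Longrightarrow> n \<le> \<bar>x\<bar>" for a b y n
  proof -
    have "\<bar>pdx f (x, y)\<bar> \<le> C / (n\<^sup>2 + y\<^sup>2)" if "x \<in> {a..b}" for x
      using \<open>0 < C\<close> \<open>1 < n\<close> strip[OF that] by (intro inverse_sq_decay_on_strip[OF decay]) auto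
    then have "norm (integral {a..b} (\<lambda>x. of_real (pdx f (x, y)) * fourier_kernel k x))
        \<le> (2 * real N + 4) * (C / (n\<^sup>2 + y\<^sup>2)) / \<bar>k\<bar>"
      using \<open>a \<le> b\<close> \<open>k \<noteq> 0\<close> zeros_bounded_restrict[OF zeros, where S="{a<..<b}"]
        smooth2_has_real_derivative_x[OF smooth pdx_in]
        continuous_on_section_x[OF smooth2_continuous[OF smooth pdxx_in]]
      by (intro norm_integral_fourier_kernel_le[where g'="\<lambda>s. pdx (pdx f) (s, y)"]) auto
    then show ?thesis by (simp add: mult.commute)
  qed
  moreover have "0 \<le> (2 * real N + 4) * C / \<bar>k\<bar>" using \<open>0 < C\<close> by simp
  ultimately show ?thesis using that by blast
qed

lemma normal_rectangle_integral_tail_le: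
  assumes smooth: "smooth2 f" and "normal f" and "k1 \<noteq> 0" and "k2 \<noteq> 0"
  obtains K where "\<And>a b c d n. a \<le> b \<Longrightarrow> 1 < n \<Longrightarrow> (\<And>x. x \<in> {a..b} \<Longrightarrow> n \<le> \<bar>x\<bar>) \<Longrightarrow>
    norm (integral {c..d} (\<lambda>y. integral {a..b}
      (\<lambda>x. of_real (f (x, y)) * fourier_kernel k1 x * fourier_kernel k2 y))) \<le> K / n"
proof -
  obtain A where edge: "\<And>c d z n. 1 < n \<Longrightarrow> n \<le> \<bar>z\<bar> \<Longrightarrow>
      norm (integral {c..d} (\<lambda>y. of_real (f (z, y)) * fourier_kernel k2 y)) \<le> A / n"
    using normal_integral_y_le[OF assms(1,2,4)] by blast
  obtain B where "0 \<le> B" and inner: "\<And>a b y n. a \<le> b \<Longrightarrow> 1 < n \<Longrightarrow> (\<And>x. x \<in> {a..b} \<Longrightarrow> n \<le> \<bar>x\<bar>) \<Longrightarrow>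
      norm (integral {a..b} (\<lambda>x. of_real (pdx f (x, y)) * fourier_kernel k1 x)) \<le> B / (n\<^sup>2 + y\<^sup>2)"
    using normal_pdx_integral_x_tail_le[OF assms(1-3)] by blast
  have f_in: "f \<in> iter_partials f" and pdx_in: "pdx f \<in> iter_partials f"
    by (auto intro: iter_partials.intros)
  have "norm (integral {c..d} (\<lambda>y. integral {a..b}
      (\<lambda>x. of_real (f (x, y)) * fourier_kernel k1 x * fourier_kernel k2 y)))
      \<le> ((2 * A + B * pi) / \<bar>k1\<bar>) / n"
    if "a \<le> b" "1 < n" and strip: "\<And>x. x \<in> {a..b} \<Longrightarrow> n \<le> \<bar>x\<bar>" for a b c d n
  proof -
    have edge_ab: "norm (integral {c..d} (\<lambda>y. of_real (f (z, y)) * fourier_kernel k2 y)) \<le> A / n"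
      if "z \<in> {a, b}" for z
      using that \<open>a \<le> b\<close> \<open>1 < n\<close> strip by (intro edge) auto
    have inner_ab: "norm (integral {a..b} (\<lambda>x. of_real (pdx f (x, y)) * fourier_kernel k1 x))
        \<le> B * (1 / (n\<^sup>2 + y\<^sup>2))" for y
      using inner[OF \<open>a \<le> b\<close> \<open>1 < n\<close> strip] by simp
    have "(\<lambda>y. 1 / (n\<^sup>2 + y\<^sup>2)) integrable_on {c..d}"
      using \<open>1 < n\<close> by (intro integrable_continuous_interval continuous_intros)
        (auto simp: add_pos_nonneg)
    then have int_B: "(\<lambda>y. B * (1 / (n\<^sup>2 + y\<^sup>2))) integrable_on {c..d}"
      by (rule integrable_on_mult_right)
    have "integral {c..d} (\<lambda>y. B * (1 / (n\<^sup>2 + y\<^sup>2))) = B * integral {c..d} (\<lambda>y. 1 / (n\<^sup>2 + y\<^sup>2))"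
      by (rule integral_mult_right)
    also have "\<dots> \<le> B * (pi / n)"
      using \<open>0 \<le> B\<close> \<open>1 < n\<close> by (intro mult_left_mono integral_inverse_sum_sq_le) auto
    finally have int_le: "integral {c..d} (\<lambda>y. B * (1 / (n\<^sup>2 + y\<^sup>2))) \<le> B * (pi / n)" .
    have "norm (integral {c..d} (\<lambda>y. integral {a..b}
        (\<lambda>x. of_real (f (x, y)) * fourier_kernel k1 x * fourier_kernel k2 y)))
        \<le> (2 * (A / n) + integral {c..d} (\<lambda>y. B * (1 / (n\<^sup>2 + y\<^sup>2)))) / \<bar>k1\<bar>"
      by (rule norm_rectangle_integral_le_by_parts[OF \<open>a \<le> b\<close> \<open>k1 \<noteq> 0\<close>
          smooth2_continuous[OF smooth f_in] smooth2_continuous[OF smooth pdx_in]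
          smooth2_has_real_derivative_x[OF smooth f_in] edge_ab inner_ab int_B])
    also have "\<dots> \<le> (2 * (A / n) + B * (pi / n)) / \<bar>k1\<bar>"
      using int_le by (intro divide_right_mono add_left_mono) auto
    also have "\<dots> = ((2 * A + B * pi) / \<bar>k1\<bar>) / n"
      using \<open>1 < n\<close> by (simp add: field_simps)
    finally show ?thesis .
  qed
  then show ?thesis by (rule that)
qed

lemma partial_fourier_transform_rate:
  assumes "smooth2 f" and "normal f" and "k \<noteq> 0"
  obtains F B where
    "\<And>y. ((\<lambda>r. integral {-r..r} (\<lambda>x. of_real (f (x, y)) * fourier_kernel k x)) \<longlongrightarrow> F y) at_top"
    "\<And>y r. 1 < r \<Longrightarrow> norm (integral {-r..r} (\<lambda>x. of_real (f (x, y)) * fourier_kernel k x) - F y) \<le> B / r"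
proof -
  obtain B where tail: "\<And>a b y n. a \<le> b \<Longrightarrow> 1 < n \<Longrightarrow> (\<And>x. x \<in> {a..b} \<Longrightarrow> n \<le> \<bar>x\<bar>) \<Longrightarrow>
      norm (integral {a..b} (\<lambda>x. of_real (f (x, y)) * fourier_kernel k x)) \<le> B / n"
    using normal_integral_x_tail_le[OF assms] by blast
  define \<phi> where "\<phi> y r = integral {-r..r} (\<lambda>x. of_real (f (x, y)) * fourier_kernel k x)" for y r
  have "continuous_on UNIV (\<lambda>p. of_real (f p) * fourier_kernel k (fst p))"
    using smooth2_continuous[OF \<open>smooth2 f\<close> iter_partials.base] by (intro continuous_intros) auto
  from continuous_on_section_x[OF this]
  have cont_section: "continuous_on S (\<lambda>x. of_real (f (x, y)) * fourier_kernel k x)" for S y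
    by simp
  have "norm (\<phi> y r' - \<phi> y r) \<le> 2 * B / r" if "1 < r" "r \<le> r'" for y r r'
  proof -
    have "\<phi> y r' - \<phi> y r = integral {-r'..-r} (\<lambda>x. of_real (f (x, y)) * fourier_kernel k x)
        + integral {r..r'} (\<lambda>x. of_real (f (x, y)) * fourier_kernel k x)"
      unfolding \<phi>_def using that
      by (intro integral_diff_symmetric_intervals integrable_continuous_interval cont_section) auto
    also have "norm \<dots> \<le> B / r + B / r"
      using that by (intro norm_triangle_le add_mono tail) auto
    finally show ?thesis by simp
  qed
  then have "\<exists>l. (\<phi> y \<longlongrightarrow> l) at_top \<and> (\<forall>r>1. norm (\<phi> y r - l) \<le> 2 * B / r)" for y
    by (rule tendsto_at_top_of_Cauchy_rate)
  then obtain F where "\<And>y. (\<phi> y \<longlongrightarrow> F y) at_top" "\<And>y r. 1 < r \<Longrightarrow> norm (\<phi> y r - F y) \<le> 2 * B / r"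
    using choice[of "\<lambda>y l. (\<phi> y \<longlongrightarrow> l) at_top \<and> (\<forall>r>1. norm (\<phi> y r - l) \<le> 2 * B / r)"] by blast
  then show ?thesis
    by (intro that[of F "2 * B"]) (simp_all add: \<phi>_def[abs_def])
qed

definition truncated_double_fourier ::
    "(real \<times> real \<Rightarrow> real) \<Rightarrow> real \<Rightarrow> real \<Rightarrow> real \<Rightarrow> real \<Rightarrow> complex" where
  "truncated_double_fourier f k1 k2 m n = integral {-m..m} (\<lambda>y. integral {-n..n}
    (\<lambda>x. of_real (f (x, y)) * fourier_kernel k1 x * fourier_kernel k2 y))"

lemma truncated_double_fourier_swap:
  assumes "continuous_on UNIV f"
  shows "truncated_double_fourier (f \<circ> prod.swap) k2 k1 n m = truncated_double_fourier f k1 k2 m n"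
proof -
  have "continuous_on UNIV (\<lambda>p. of_real (f p) * fourier_kernel k1 (fst p) * fourier_kernel k2 (snd p))"
    using assms by (intro continuous_intros) auto
  from integral_swap_continuous_interval[OF this] show ?thesis
    by (simp add: truncated_double_fourier_def mult_ac)
qed

lemma partial_fourier_transform_limit:
  assumes "smooth2 f" and "normal f" and "k1 \<noteq> 0"
  obtains F where
    "\<And>y. ((\<lambda>r. integral {-r..r} (\<lambda>x. of_real (f (x, y)) * fourier_kernel k1 x)) \<longlongrightarrow> F y) at_top"
    "\<And>m. (\<lambda>y. F y * fourier_kernel k2 y) integrable_on {-m..m}"
    "\<And>m. (truncated_double_fourier f k1 k2 m
      \<longlongrightarrow> integral {-m..m} (\<lambda>y. F y * fourier_kernel k2 y)) at_top"
proof -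
  define \<phi> where "\<phi> y n = integral {-n..n} (\<lambda>x. of_real (f (x, y)) * fourier_kernel k1 x)" for y n
  obtain F B where lim: "\<And>y. (\<phi> y \<longlongrightarrow> F y) at_top"
    and rate: "\<And>y r. 1 < r \<Longrightarrow> norm (\<phi> y r - F y) \<le> B / r"
    using partial_fourier_transform_rate[OF assms] unfolding \<phi>_def[abs_def] by blast
  have "continuous_on UNIV (\<lambda>p. of_real (f p) * fourier_kernel k1 (fst p))"
    using smooth2_continuous[OF \<open>smooth2 f\<close> iter_partials.base] by (intro continuous_intros) auto
  from continuous_on_integral_param[OF this]
  have cont_\<phi>: "continuous_on UNIV (\<lambda>y. \<phi> y n)" for n
    by (simp add: \<phi>_def)
  have "(\<lambda>y. F y * fourier_kernel k2 y) integrable_on {-m..m} \<and>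
      ((\<lambda>n. integral {-m..m} (\<lambda>y. \<phi> y n * fourier_kernel k2 y))
        \<longlongrightarrow> integral {-m..m} (\<lambda>y. F y * fourier_kernel k2 y)) at_top" for m
  proof -
    have "uniform_limit {-m..m} (\<lambda>n y. \<phi> y n * fourier_kernel k2 y) (\<lambda>y. F y * fourier_kernel k2 y) at_top"
      using rate by (intro uniform_limit_at_top_of_rate)
        (simp add: dist_norm norm_mult left_diff_distrib[symmetric])
    moreover have "continuous_on {-m..m} (\<lambda>y. \<phi> y n * fourier_kernel k2 y)" for n
      by (intro continuous_intros continuous_on_subset[OF cont_\<phi>]) auto
    ultimately obtain I J where "\<And>n. ((\<lambda>y. \<phi> y n * fourier_kernel k2 y) has_integral I n) {-m..m}"
      and "((\<lambda>y. F y * fourier_kernel k2 y) has_integral J) {-m..m}" and "(I \<longlongrightarrow> J) at_top"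
      by (rule uniform_limit_integral) auto
    moreover from this(1) have "(\<lambda>n. integral {-m..m} (\<lambda>y. \<phi> y n * fourier_kernel k2 y)) = I"
      by (simp add: fun_eq_iff integral_unique)
    ultimately show ?thesis by (auto simp: integral_unique)
  qed
  with lim show ?thesis
    by (intro that) (auto simp: \<phi>_def[abs_def] truncated_double_fourier_def[abs_def])
qed

lemma double_fourier_integral_converges:
  assumes smooth: "smooth2 f" and "normal f" and "k1 \<noteq> 0" and "k2 \<noteq> 0"
  shows "\<exists>L. ((\<lambda>(m, n). truncated_double_fourier f k1 k2 m n) \<longlongrightarrow> L) (at_top \<times>\<^sub>F at_top)"
proof -
  define \<Phi> where "\<Phi> p = of_real (f p) * fourier_kernel k1 (fst p) * fourier_kernel k2 (snd p)" for p
  define I where "I m n = integral {-m..m} (\<lambda>y. integral {-n..n} (\<lambda>x. \<Phi> (x, y)))" for m n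
  have cont: "continuous_on UNIV \<Phi>"
    unfolding \<Phi>_def using smooth2_continuous[OF smooth iter_partials.base]
    by (intro continuous_intros) auto
  obtain Kx where "\<And>a b c d n. a \<le> b \<Longrightarrow> 1 < n \<Longrightarrow> (\<And>x. x \<in> {a..b} \<Longrightarrow> n \<le> \<bar>x\<bar>) \<Longrightarrow>
      norm (integral {c..d} (\<lambda>y. integral {a..b}
        (\<lambda>x. of_real (f (x, y)) * fourier_kernel k1 x * fourier_kernel k2 y))) \<le> Kx / n"
    using normal_rectangle_integral_tail_le[OF assms] by blast
  then have tail_x: "\<And>a b c d n. a \<le> b \<Longrightarrow> 1 < n \<Longrightarrow> (\<And>x. x \<in> {a..b} \<Longrightarrow> n \<le> \<bar>x\<bar>) \<Longrightarrow>
      norm (integral {c..d} (\<lambda>y. integral {a..b} (\<lambda>x. \<Phi> (x, y)))) \<le> Kx / n"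
    by (simp add: \<Phi>_def)
  obtain Ky where "\<And>a b c d n. a \<le> b \<Longrightarrow> 1 < n \<Longrightarrow> (\<And>y. y \<in> {a..b} \<Longrightarrow> n \<le> \<bar>y\<bar>) \<Longrightarrow>
      norm (integral {c..d} (\<lambda>x. integral {a..b}
        (\<lambda>y. of_real ((f \<circ> prod.swap) (y, x)) * fourier_kernel k2 y * fourier_kernel k1 x))) \<le> Ky / n"
    using normal_rectangle_integral_tail_le[OF smooth2_swap[OF smooth] normal_swap[OF \<open>normal f\<close>]
        \<open>k2 \<noteq> 0\<close> \<open>k1 \<noteq> 0\<close>] by blast
  then have tail_y: "\<And>a b c d n. a \<le> b \<Longrightarrow> 1 < n \<Longrightarrow> (\<And>y. y \<in> {a..b} \<Longrightarrow> n \<le> \<bar>y\<bar>) \<Longrightarrow>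
      norm (integral {c..d} (\<lambda>x. integral {a..b} (\<lambda>y. \<Phi> (x, y)))) \<le> Ky / n"
    by (simp add: \<Phi>_def mult_ac)
  have "norm (I m n' - I m n) \<le> (2 * Kx) / n" if "1 < n" "n \<le> n'" for m n n'
  proof -
    have "I m n' - I m n = integral {-m..m} (\<lambda>y. integral {-n'..-n} (\<lambda>x. \<Phi> (x, y)))
        + integral {-m..m} (\<lambda>y. integral {n..n'} (\<lambda>x. \<Phi> (x, y)))"
      unfolding I_def using that by (intro double_integral_diff_inner[OF cont]) auto
    also have "norm \<dots> \<le> Kx / n + Kx / n"
      using that by (intro norm_triangle_le add_mono tail_x) auto
    finally show ?thesis by simp
  qed
  moreover have "norm (I m' n - I m n) \<le> (2 * Ky) / m" if "1 < m" "m \<le> m'" for m m' n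
  proof -
    have "I m' n - I m n = integral {-n..n} (\<lambda>x. integral {-m'..-m} (\<lambda>y. \<Phi> (x, y)))
        + integral {-n..n} (\<lambda>x. integral {m..m'} (\<lambda>y. \<Phi> (x, y)))"
      unfolding I_def using that by (intro double_integral_diff_outer[OF cont]) auto
    also have "norm \<dots> \<le> Ky / m + Ky / m"
      using that by (intro norm_triangle_le add_mono tail_y) auto
    finally show ?thesis by simp
  qed
  ultimately have "\<exists>L. ((\<lambda>(m, n). I m n) \<longlongrightarrow> L) (at_top \<times>\<^sub>F at_top)"
    by (rule prod_at_top_tendsto_of_Cauchy_rate)
  then show ?thesis by (simp add: I_def \<Phi>_def truncated_double_fourier_def)
qed

theorem lemma12:
  fixes f :: "real \<times> real \<Rightarrow> real" and k1 k2 :: real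
  assumes "smooth2 f" and "normal f" and "k1 \<noteq> 0" and "k2 \<noteq> 0"
  shows "\<exists>(F :: real \<Rightarrow> complex) (G :: real \<Rightarrow> complex) (L :: complex).
     (\<forall>y. ((\<lambda>r. integral {-r..r}
              (\<lambda>x. complex_of_real (f (x, y)) * exp (- \<i> * of_real k1 * of_real x)))
            \<longlongrightarrow> F y) at_top) \<and>
     (\<forall>x. ((\<lambda>r. integral {-r..r}
              (\<lambda>y. complex_of_real (f (x, y)) * exp (- \<i> * of_real k2 * of_real y)))
            \<longlongrightarrow> G x) at_top) \<and>
     (\<forall>r. (\<lambda>y. F y * exp (- \<i> * of_real k2 * of_real y)) integrable_on {-r..r}) \<and>
     (\<forall>r. (\<lambda>x. G x * exp (- \<i> * of_real k1 * of_real x)) integrable_on {-r..r}) \<and>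
     ((\<lambda>r. integral {-r..r} (\<lambda>y. F y * exp (- \<i> * of_real k2 * of_real y)))
        \<longlongrightarrow> L) at_top \<and>
     ((\<lambda>r. integral {-r..r} (\<lambda>x. G x * exp (- \<i> * of_real k1 * of_real x)))
        \<longlongrightarrow> L) at_top \<and>
     ((\<lambda>(m, n). integral {-m..m} (\<lambda>y. integral {-n..n}
          (\<lambda>x. complex_of_real (f (x, y)) * exp (- \<i> * of_real k1 * of_real x)
                 * exp (- \<i> * of_real k2 * of_real y))))
        \<longlongrightarrow> L) (at_top \<times>\<^sub>F at_top)"
proof -
  have "continuous_on UNIV f" by (rule smooth2_continuous[OF assms(1) iter_partials.base])
  obtain F where F_lim: "\<And>y. ((\<lambda>r. integral {-r..r}
      (\<lambda>x. of_real (f (x, y)) * fourier_kernel k1 x)) \<longlongrightarrow> F y) at_top"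
    and F_int: "\<And>m. (\<lambda>y. F y * fourier_kernel k2 y) integrable_on {-m..m}"
    and F_iter: "\<And>m. (truncated_double_fourier f k1 k2 m
      \<longlongrightarrow> integral {-m..m} (\<lambda>y. F y * fourier_kernel k2 y)) at_top"
    using partial_fourier_transform_limit[OF assms(1-3)] by blast
  obtain G where G_lim: "\<And>x. ((\<lambda>r. integral {-r..r}
      (\<lambda>y. of_real ((f \<circ> prod.swap) (y, x)) * fourier_kernel k2 y)) \<longlongrightarrow> G x) at_top"
    and G_int: "\<And>n. (\<lambda>x. G x * fourier_kernel k1 x) integrable_on {-n..n}"
    and G_iter: "\<And>n. (truncated_double_fourier (f \<circ> prod.swap) k2 k1 n
      \<longlongrightarrow> integral {-n..n} (\<lambda>x. G x * fourier_kernel k1 x)) at_top"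
    using partial_fourier_transform_limit[OF smooth2_swap[OF assms(1)] normal_swap[OF assms(2)] assms(4)]
    by blast
  obtain L where L: "((\<lambda>(m, n). truncated_double_fourier f k1 k2 m n) \<longlongrightarrow> L) (at_top \<times>\<^sub>F at_top)"
    using double_fourier_integral_converges[OF assms] by blast
  have "((\<lambda>m. integral {-m..m} (\<lambda>y. F y * fourier_kernel k2 y)) \<longlongrightarrow> L) at_top"
    using F_iter by (intro tendsto_iterated_of_prod_filter[OF L]) simp_all
  moreover have "((\<lambda>n. integral {-n..n} (\<lambda>x. G x * fourier_kernel k1 x)) \<longlongrightarrow> L) at_top"
    using G_iter unfolding truncated_double_fourier_swap[OF \<open>continuous_on UNIV f\<close>]
    by (intro tendsto_iterated_of_prod_filter[OF tendsto_prod_filter_swap[OF L]]) simp_all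
  ultimately show ?thesis
    using F_lim G_lim F_int G_int L unfolding truncated_double_fourier_def fourier_kernel_def
    by (intro exI[of _ F] exI[of _ G] exI[of _ L]) (simp add: case_prod_unfold)
qed

end
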